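(* Let $H$ be the 28-element set $H=\{n_M : n\in\mathbb{Z}_{12}\}\cup\{n_m : n\in\mathbb{Z}_{12}\}\cup\{n_{\mathrm{aug}} : n\in\{0,1,2,3\}\}$, and let $\mathcal{T}$ be the symmetric relation on $H$ consisting exactly of the pairs $(n_M,(n+4)_M)$, $(n_M,(n+8)_M)$, $(n_M,(n+1)_m)$, $(n_M,(n+5)_m)$, $(n_M,((n+3)\bmod 4)_{\mathrm{aug}})$, $(n_m,(n+4)_m)$, $(n_m,(n+8)_m)$, $(n_m,(n+11)_M)$, $(n_m,(n+7)_M)$, $(n_m,(n\bmod 4)_{\mathrm{aug}})$ for $n\in\mathbb{Z}_{12}$, together with the reverses of all these pairs. Then the monoid $M_{\mathcal{T}}$ of relations on $H$ generated by $\mathcal{T}$ under composition of relations has the presentation $M_{\mathcal{T}}=\langle \mathcal{T}\mid \mathcal{T}^4=\mathcal{T}^3\rangle$.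
   Context: Indices $n$ of $n_M,n_m$ are taken modulo 12; the elements of $H$ are formal labels (musically: $n_M=\{n,n+4,n+7\}$, $n_m=\{n,n+3,n+7\}$, $k_{\mathrm{aug}}=\{k,k+4,k+8\}$ in $\mathbb{Z}_{12}$; $\mathcal{T}$ is Douthett's relation $\mathcal{P}_{2,0}$). Composition of relations: $\mathcal{R}'\mathcal{R}$ is the set of pairs $(x,z)$ such that there exists $y$ with $(x,y)\in\mathcal{R}$ and $(y,z)\in\mathcal{R}'$; the monoid identity is the identity relation on $H$. *)

theory Defs
  imports Main
begin

datatype chord = Maj int | Min int | Aug int

definition H :: "chord set" where
  "H = {Maj n | n. 0 \<le> n \<and> n < 12} \<union> {Min n | n. 0 \<le> n \<and> n < 12}
       \<union> {Aug n | n. 0 \<le> n \<and> n < 4}"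

definition T0 :: "chord rel" where
  "T0 = (\<Union>n\<in>{0..<12::int}.
     {(Maj n, Maj ((n+4) mod 12)), (Maj n, Maj ((n+8) mod 12)),
      (Maj n, Min ((n+1) mod 12)), (Maj n, Min ((n+5) mod 12)),
      (Maj n, Aug ((n+3) mod 4)),
      (Min n, Min ((n+4) mod 12)), (Min n, Min ((n+8) mod 12)),
      (Min n, Maj ((n+11) mod 12)), (Min n, Maj ((n+7) mod 12)),
      (Min n, Aug (n mod 4))})"

definition T :: "chord rel" where
  "T = T0 \<union> T0\<inverse>"

text \<open>Powers in the monoid of relations on H: identity is Id_on H, and
  the composition R'R of the paper is R O R' in Isabelle.\<close>
fun hpow :: "chord rel \<Rightarrow> nat \<Rightarrow> chord rel" where
  "hpow R 0 = Id_on H"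
| "hpow R (Suc k) = hpow R k O R"

inductive_set gen_monoid :: "chord rel set \<Rightarrow> chord rel set" for G where
  gm_id: "Id_on H \<in> gen_monoid G"
| gm_gen: "R \<in> G \<Longrightarrow> R \<in> gen_monoid G"
| gm_comp: "A \<in> gen_monoid G \<Longrightarrow> B \<in> gen_monoid G \<Longrightarrow> A O B \<in> gen_monoid G"

end

theory Submission
  imports Defs
begin

text \<open>Transposition by a semitone permutes \<open>H\<close> and commutes with \<open>T\<close>, so the images
  \<open>hpow T k `` {x}\<close> are determined by those of the three orbit representatives \<open>Maj 0\<close>,
  \<open>Min 0\<close> and \<open>Aug 0\<close>. For these, a finite computation shows that the images after three and
  after four steps agree, hence \<open>T\<^sup>4 = T\<^sup>3\<close>; the sizes 1, 5, 11, 14 of the images of \<open>Maj 0\<close>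
  separate \<open>T\<^sup>0, \<dots>, T\<^sup>3\<close>.\<close>

lemma hpow_subset: "R \<subseteq> H \<times> H \<Longrightarrow> hpow R k \<subseteq> H \<times> H"
  by (induction k) auto

lemma hpow_add: "R \<subseteq> H \<times> H \<Longrightarrow> hpow R (i + j) = hpow R i O hpow R j"
proof (induction j)
  case 0
  then show ?case using hpow_subset[OF 0] by auto
next
  case (Suc j)
  then show ?case by (simp add: O_assoc)
qed

lemma hpow_stable:
  assumes "hpow R (Suc m) = hpow R m" and "m \<le> k"
  shows "hpow R k = hpow R m"
  using assms(2)
proof (induction k rule: dec_induct)
  case (step k)
  then show ?case using assms(1) by simp
qed simp

lemma range_hpow_stable:
  assumes "hpow R (Suc m) = hpow R m"
  shows "range (hpow R) = hpow R ` {0..<Suc m}"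
proof -
  have "hpow R k \<in> hpow R ` {0..<Suc m}" for k
    using hpow_stable[OF assms, of k] by (cases "k \<le> m") auto
  then show ?thesis by auto
qed

lemma gen_monoid_singleton:
  assumes "R \<subseteq> H \<times> H"
  shows "gen_monoid {R} = range (hpow R)"
proof
  show "gen_monoid {R} \<subseteq> range (hpow R)"
  proof
    fix S assume "S \<in> gen_monoid {R}"
    then show "S \<in> range (hpow R)"
    proof (induction rule: gen_monoid.induct)
      case gm_id
      have "Id_on H = hpow R 0" by simp
      then show ?case by (rule range_eqI)
    next
      case (gm_gen S)
      then have "S = hpow R 1" using assms by auto
      then show ?case by (rule range_eqI)
    next
      case (gm_comp A B)
      then obtain i j where "A = hpow R i" and "B = hpow R j" by blast
      then have "A O B = hpow R (i + j)" by (simp add: hpow_add[OF assms])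
      then show ?case by (rule range_eqI)
    qed
  qed
next
  have "hpow R k \<in> gen_monoid {R}" for k
  proof (induction k)
    case 0
    then show ?case using gm_id by simp
  next
    case (Suc k)
    then show ?case using gm_comp[OF Suc gm_gen[of R]] by simp
  qed
  then show "range (hpow R) \<subseteq> gen_monoid {R}" by blast
qed

lemma rel_eq_ImageI:
  assumes "Domain A \<subseteq> S" and "Domain B \<subseteq> S" and "\<And>x. x \<in> S \<Longrightarrow> A `` {x} = B `` {x}"
  shows "A = B"
proof (intro set_eqI)
  fix p :: "'a \<times> 'b"
  obtain x y where p: "p = (x, y)" by fastforce
  show "p \<in> A \<longleftrightarrow> p \<in> B"
  proof (cases "x \<in> S")
    case True
    then show ?thesis using assms(3)[OF True] p by blast
  next
    case False
    then show ?thesis using assms(1,2) p by blast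
  qed
qed

lemma hpow_Image_equivariant:
  assumes "R \<subseteq> H \<times> H" and "f ` H \<subseteq> H"
    and "\<And>x. x \<in> H \<Longrightarrow> R `` {f x} = f ` (R `` {x})" and "x \<in> H"
  shows "hpow R k `` {f x} = f ` (hpow R k `` {x})"
proof (induction k)
  case 0
  then show ?case using assms(2,4) by auto
next
  case (Suc k)
  have "hpow R (Suc k) `` {f x} = R `` (f ` (hpow R k `` {x}))"
    using Suc by (simp add: relcomp_Image)
  also have "\<dots> = (\<Union>y\<in>hpow R k `` {x}. R `` {f y})"
    by blast
  also have "\<dots> = (\<Union>y\<in>hpow R k `` {x}. f ` (R `` {y}))"
    using hpow_subset[OF assms(1), of k] assms(3) by (intro SUP_cong) auto
  also have "\<dots> = f ` (R `` (hpow R k `` {x}))"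
    by blast
  also have "\<dots> = f ` (hpow R (Suc k) `` {x})"
    by (simp add: relcomp_Image)
  finally show ?case .
qed

lemma T0_subset: "T0 \<subseteq> H \<times> H"
  unfolding T0_def H_def by auto

lemma T_subset: "T \<subseteq> H \<times> H"
  using T0_subset unfolding T_def by blast

definition H_list :: "chord list" where
  "H_list = map Maj [0..11] @ map Min [0..11] @ map Aug [0..3]"

lemma set_H_list: "set H_list = H"
  unfolding H_def H_list_def by auto

lemma H_list_eq:
  "H_list = map Maj [0, 1, 2, 3, 4, 5, 6, 7, 8, 9, 10, 11]
    @ map Min [0, 1, 2, 3, 4, 5, 6, 7, 8, 9, 10, 11] @ map Aug [0, 1, 2, 3]"
  by (simp add: H_list_def upto.simps)

lemma ball_H_iff_list_all: "(\<forall>x\<in>H. P x) \<longleftrightarrow> list_all P H_list"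
  by (simp add: list_all_iff set_H_list)

definition T0_nbrs :: "chord \<Rightarrow> chord list" where
  "T0_nbrs x = (case x of
      Maj n \<Rightarrow> [Maj ((n+4) mod 12), Maj ((n+8) mod 12), Min ((n+1) mod 12), Min ((n+5) mod 12),
                 Aug ((n+3) mod 4)]
    | Min n \<Rightarrow> [Min ((n+4) mod 12), Min ((n+8) mod 12), Maj ((n+11) mod 12), Maj ((n+7) mod 12),
                 Aug (n mod 4)]
    | Aug a \<Rightarrow> [])"

lemma T0_Image: "x \<in> H \<Longrightarrow> T0 `` {x} = set (T0_nbrs x)"
  unfolding H_def T0_def T0_nbrs_def by auto

lemma T_Image_T0_nbrs:
  "x \<in> H \<Longrightarrow> T `` {x} = set (T0_nbrs x) \<union> {y \<in> H. x \<in> set (T0_nbrs y)}"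
proof -
  assume "x \<in> H"
  have "T0\<inverse> `` {x} = {y \<in> H. (y, x) \<in> T0}"
    using T0_subset by blast
  also have "\<dots> = {y \<in> H. x \<in> set (T0_nbrs y)}"
    using T0_Image by blast
  finally show ?thesis
    unfolding T_def using T0_Image[OF \<open>x \<in> H\<close>] by blast
qed

text \<open>The major/minor part of \<open>T0\<close> is already closed under reversal; only the edges into
  the augmented triads have to be reversed.\<close>

definition T_nbrs :: "chord \<Rightarrow> chord list" where
  "T_nbrs x = (case x of
      Aug a \<Rightarrow> [Maj (a+1), Maj (a+5), Maj ((a+9) mod 12), Min a, Min (a+4), Min (a+8)]
    | _ \<Rightarrow> T0_nbrs x)"

lemma T_Image: "x \<in> H \<Longrightarrow> T `` {x} = set (T_nbrs x)"
proof -
  have "\<forall>x\<in>H. set (T_nbrs x)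
      = set (T0_nbrs x) \<union> set (filter (\<lambda>y. x \<in> set (T0_nbrs y)) H_list)"
    \<comment> \<open>split into 28 ground instances first: simplifying the filter for a symbolic \<open>x\<close> blows up\<close>
    unfolding ball_H_iff_list_all H_list_eq list.map append.simps list.pred_inject
    by (simp add: T_nbrs_def T0_nbrs_def set_eq_subset)
  then show "x \<in> H \<Longrightarrow> T `` {x} = set (T_nbrs x)"
    using T_Image_T0_nbrs by (simp add: set_H_list)
qed

fun T_walk_ends :: "nat \<Rightarrow> chord \<Rightarrow> chord list" where
  "T_walk_ends 0 x = [x]"
| "T_walk_ends (Suc k) x = remdups (concat (map T_nbrs (T_walk_ends k x)))"

lemma hpow_T_Image: "x \<in> H \<Longrightarrow> hpow T k `` {x} = set (T_walk_ends k x)"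
proof (induction k)
  case (Suc k)
  have "hpow T (Suc k) `` {x} = T `` set (T_walk_ends k x)"
    using Suc by (simp add: relcomp_Image)
  also have "\<dots> = (\<Union>y\<in>set (T_walk_ends k x). set (T_nbrs y))"
    using Suc hpow_subset[OF T_subset, of k] T_Image by blast
  finally show ?case by simp
qed auto

lemma T_walk_ends_4_3: "b \<in> {Maj 0, Min 0, Aug 0} \<Longrightarrow> set (T_walk_ends 4 b) = set (T_walk_ends 3 b)"
  by (elim insertE emptyE) (simp_all add: T_nbrs_def T0_nbrs_def numeral_eq_Suc set_eq_subset)

lemma length_T_walk_ends_Maj_0: "map (\<lambda>k. length (T_walk_ends k (Maj 0))) [0..<4] = [1, 5, 11, 14]"
  by (simp add: T_nbrs_def T0_nbrs_def numeral_eq_Suc upt_rec)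

fun semitone_up :: "chord \<Rightarrow> chord" where
  "semitone_up (Maj n) = Maj ((n+1) mod 12)"
| "semitone_up (Min n) = Min ((n+1) mod 12)"
| "semitone_up (Aug a) = Aug ((a+1) mod 4)"

lemma semitone_up_H: "semitone_up ` H \<subseteq> H"
  unfolding H_def by auto

lemma T_Image_semitone_up: "x \<in> H \<Longrightarrow> T `` {semitone_up x} = semitone_up ` (T `` {x})"
proof -
  have "\<forall>x\<in>H. set (T_nbrs (semitone_up x)) = semitone_up ` set (T_nbrs x)"
    unfolding ball_H_iff_list_all H_list_eq list.map append.simps list.pred_inject
    by (simp add: T_nbrs_def T0_nbrs_def set_eq_subset)
  moreover assume x: "x \<in> H"
  moreover have "semitone_up x \<in> H"
    using x semitone_up_H by blast
  ultimately show ?thesis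
    by (simp add: T_Image)
qed

lemma H_semitone_orbits: "x \<in> H \<Longrightarrow> \<exists>k b. b \<in> {Maj 0, Min 0, Aug 0} \<and> x = (semitone_up ^^ k) b"
proof -
  have Maj: "(semitone_up ^^ k) (Maj 0) = Maj (int k mod 12)"
   and Min: "(semitone_up ^^ k) (Min 0) = Min (int k mod 12)"
   and Aug: "(semitone_up ^^ k) (Aug 0) = Aug (int k mod 4)" for k
    by (induction k) (auto simp: mod_simps add.commute)
  assume "x \<in> H"
  then obtain n where "x \<in> {Maj n, Min n} \<and> 0 \<le> n \<and> n < 12 \<or> x = Aug n \<and> 0 \<le> n \<and> n < 4"
    unfolding H_def by blast
  then show ?thesis
    using Maj[of "nat n"] Min[of "nat n"] Aug[of "nat n"]
    by (metis insertCI insertE singletonD nat_0_le mod_pos_pos_trivial)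
qed

lemma hpow_T_4_3: "hpow T 4 = hpow T 3"
proof (rule rel_eq_ImageI)
  show "Domain (hpow T 4) \<subseteq> H" "Domain (hpow T 3) \<subseteq> H"
    using hpow_subset[OF T_subset] by blast+
  have "hpow T 4 `` {(semitone_up ^^ k) b} = hpow T 3 `` {(semitone_up ^^ k) b}"
    if rep: "b \<in> {Maj 0, Min 0, Aug 0}" for k b
  proof -
    have b: "b \<in> H"
      using rep unfolding H_def by auto
    have orbit: "(semitone_up ^^ j) b \<in> H" for j
      using b semitone_up_H by (induction j) auto
    show ?thesis
    proof (induction k)
      case 0
      show ?case using T_walk_ends_4_3[OF rep] b by (simp add: hpow_T_Image)
    next
      case (Suc k)
      then show ?case
        using hpow_Image_equivariant[OF T_subset semitone_up_H T_Image_semitone_up orbit] by simp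
    qed
  qed
  then show "hpow T 4 `` {x} = hpow T 3 `` {x}" if "x \<in> H" for x
    using H_semitone_orbits[OF that] by blast
qed

lemma distinct_T_walk_ends: "distinct (T_walk_ends k x)"
  by (cases k) auto

lemma inj_on_hpow_T: "inj_on (hpow T) {..<4}"
proof (rule inj_onI)
  fix i j :: nat
  assume i: "i \<in> {..<4}" and j: "j \<in> {..<4}" and eq: "hpow T i = hpow T j"
  have "Maj 0 \<in> H"
    unfolding H_def by auto
  then have "card (set (T_walk_ends i (Maj 0))) = card (set (T_walk_ends j (Maj 0)))"
    using eq by (simp add: hpow_T_Image[symmetric])
  then have "map (\<lambda>k. length (T_walk_ends k (Maj 0))) [0..<4] ! i
           = map (\<lambda>k. length (T_walk_ends k (Maj 0))) [0..<4] ! j"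
    using i j by (simp add: distinct_card distinct_T_walk_ends)
  then have "[1, 5, 11, 14 :: nat] ! i = [1, 5, 11, 14] ! j"
    by (simp only: length_T_walk_ends_Maj_0)
  moreover have "i \<in> {0, 1, 2, 3}" "j \<in> {0, 1, 2, 3}"
    using i j by auto
  ultimately show "i = j"
    by auto
qed

theorem mainTheorem3:
  shows "T \<subseteq> H \<times> H \<and> sym T
    \<and> gen_monoid {T} = hpow T ` {0..<4}
    \<and> (\<forall>i<4. \<forall>j<4. hpow T i = hpow T j \<longrightarrow> i = j)
    \<and> hpow T 4 = hpow T 3"
proof (intro conjI)
  show "T \<subseteq> H \<times> H"
    by (rule T_subset)
  show "sym T"
    unfolding T_def by (rule sym_Un_converse)
  have "hpow T (Suc 3) = hpow T 3"
    using hpow_T_4_3 by (simp del: hpow.simps)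
  then have "range (hpow T) = hpow T ` {0..<Suc 3}"
    by (rule range_hpow_stable)
  then show "gen_monoid {T} = hpow T ` {0..<4}"
    using gen_monoid_singleton[OF T_subset] by simp
  show "\<forall>i<4. \<forall>j<4. hpow T i = hpow T j \<longrightarrow> i = j"
    using inj_on_hpow_T unfolding inj_on_def by blast
  show "hpow T 4 = hpow T 3"
    by (rule hpow_T_4_3)
qed

end
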